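(* Consider an open quantum system on a finite-dimensional Hilbert space $\mathcal H$ with Hamiltonian $H$ and coupling operators $L_1,\dots,L_K$. Let $V$ be a Lyapunov operator (commuting with $H$) which is a projection, $V^2=V$. If $V$ satisfies Condition DS but does not satisfy Condition ES, then at least one of the coupling operators $L_k$ cannot be written as $L_k=U_kV$ with $U_k$ unitary. In particular, in the single-channel case ($K=1$), the coupling operator $L$ cannot be written as $L=UV$ with $U$ unitary.
   Context: For an observable $X$ commuting with $H$ the generator is $\mathcal G(X)=\sum_{k=1}^K\big(L_k^\dagger XL_k-\tfrac12L_k^\dagger L_kX-\tfrac12XL_k^\dagger L_k\big)$ (the system density evolves by $\dot\rho=-i[H,\rho]+\sum_k(L_k\rho L_k^\dagger-\tfrac12L_k^\dagger L_k\rho-\tfrac12\rho L_k^\dagger L_k)$). A Lyapunov operator is a self-adjoint $V\ge0$ with smallest eigenvalue $0$ and $\mathcal G(V)\le0$. Dissipation functional: $\mathfrak D(X)=\mathcal G(X^\dagger X)-\mathcal G(X^\dagger)X-X^\dagger\mathcal G(X)$. Condition ES: $\mathcal G(V)\le-cV$ for some $c>0$. Condition DS: $\mathcal G(V)\le0$ and $cV\le\mathfrak D(V)$ for some $c>0$. *)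

theory Defs
  imports "Jordan_Normal_Form.Schur_Decomposition" "Jordan_Normal_Form.Char_Poly"
begin

definition hermitian_mat :: "nat \<Rightarrow> complex mat \<Rightarrow> bool" where
  "hermitian_mat n A \<longleftrightarrow> A \<in> carrier_mat n n \<and> mat_adjoint A = A"

definition unitary_mat :: "nat \<Rightarrow> complex mat \<Rightarrow> bool" where
  "unitary_mat n U \<longleftrightarrow> U \<in> carrier_mat n n \<and>
     mat_adjoint U * U = 1\<^sub>m n \<and> U * mat_adjoint U = 1\<^sub>m n"

definition psd_mat :: "nat \<Rightarrow> complex mat \<Rightarrow> bool" where
  "psd_mat n A \<longleftrightarrow> A \<in> carrier_mat n n \<and>
     (\<forall>v \<in> carrier_vec n. Im ((A *\<^sub>v v) \<bullet>c v) = 0 \<and> 0 \<le> Re ((A *\<^sub>v v) \<bullet>c v))"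

definition loewner_le :: "nat \<Rightarrow> complex mat \<Rightarrow> complex mat \<Rightarrow> bool" where
  "loewner_le n A B \<longleftrightarrow> A \<in> carrier_mat n n \<and> B \<in> carrier_mat n n \<and> psd_mat n (B - A)"

fun msum :: "nat \<Rightarrow> (nat \<Rightarrow> complex mat) \<Rightarrow> nat \<Rightarrow> complex mat" where
  "msum n f 0 = 0\<^sub>m n n"
| "msum n f (Suc k) = msum n f k + f k"

text \<open>Heisenberg-picture generator (dissipative part) for K channels L 0, ..., L (K-1).\<close>
definition gen :: "nat \<Rightarrow> (nat \<Rightarrow> complex mat) \<Rightarrow> nat \<Rightarrow> complex mat \<Rightarrow> complex mat" where
  "gen n L K X = msum n (\<lambda>k. mat_adjoint (L k) * X * L k
       - (1/2 :: complex) \<cdot>\<^sub>m (mat_adjoint (L k) * L k * X)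
       - (1/2 :: complex) \<cdot>\<^sub>m (X * (mat_adjoint (L k) * L k))) K"

definition dissip :: "nat \<Rightarrow> (nat \<Rightarrow> complex mat) \<Rightarrow> nat \<Rightarrow> complex mat \<Rightarrow> complex mat" where
  "dissip n L K X = gen n L K (mat_adjoint X * X) - gen n L K (mat_adjoint X) * X
                    - mat_adjoint X * gen n L K X"

definition lyapunov_op :: "nat \<Rightarrow> (nat \<Rightarrow> complex mat) \<Rightarrow> nat \<Rightarrow> complex mat \<Rightarrow> bool" where
  "lyapunov_op n L K V \<longleftrightarrow> hermitian_mat n V \<and> psd_mat n V \<and> eigenvalue V 0 \<and>
     loewner_le n (gen n L K V) (0\<^sub>m n n)"

definition cond_ES :: "nat \<Rightarrow> (nat \<Rightarrow> complex mat) \<Rightarrow> nat \<Rightarrow> complex mat \<Rightarrow> bool" where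
  "cond_ES n L K V \<longleftrightarrow> (\<exists>c::real. c > 0 \<and>
     loewner_le n (gen n L K V) ((- complex_of_real c) \<cdot>\<^sub>m V))"

definition cond_DS :: "nat \<Rightarrow> (nat \<Rightarrow> complex mat) \<Rightarrow> nat \<Rightarrow> complex mat \<Rightarrow> bool" where
  "cond_DS n L K V \<longleftrightarrow> loewner_le n (gen n L K V) (0\<^sub>m n n) \<and>
     (\<exists>c::real. c > 0 \<and> loewner_le n (complex_of_real c \<cdot>\<^sub>m V) (dissip n L K V))"

end

theory Submission imports Defs begin

text \<open>If every coupling operator factors as \<open>L\<^sub>k = U\<^sub>k V\<close>, only \<open>L\<^sub>k V = L\<^sub>k\<close> matters. Since \<open>V\<close> is self-adjoint this also gives
  \<open>V L\<^sub>k\<^sup>* = L\<^sub>k\<^sup>*\<close>, so each channel contributes \<open>L\<^sub>k\<^sup>* (V - 1) L\<^sub>k\<close> to \<open>G(V)\<close>, and \<open>G(V)\<close> is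
  absorbed by \<open>V\<close> from both sides. With \<open>V\<^sup>2 = V\<close> the dissipation functional collapses to
  \<open>D(V) = G(V) - 2 G(V) = -G(V)\<close>, so Condition DS \<open>c V \<le> D(V)\<close> is literally Condition ES
  \<open>G(V) \<le> -c V\<close>.\<close>

lemma index_mat_adjoint:
  "i < dim_col A \<Longrightarrow> j < dim_row A \<Longrightarrow> mat_adjoint A $$ (i, j) = conjugate (A $$ (j, i))"
  and dim_mat_adjoint [simp]:
  "dim_row (mat_adjoint A) = dim_col A" "dim_col (mat_adjoint A) = dim_row A"
  unfolding mat_adjoint_def by (auto simp: mat_of_rows_def)

lemma mat_adjoint_carrier_mat [simp]: "A \<in> carrier_mat n m \<Longrightarrow> mat_adjoint A \<in> carrier_mat m n"
  unfolding carrier_mat_def by simp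

lemma mat_adjoint_mult:
  fixes A B :: "'a :: conjugatable_field mat"
  assumes "A \<in> carrier_mat n n" "B \<in> carrier_mat n n"
  shows "mat_adjoint (A * B) = mat_adjoint B * mat_adjoint A"
proof (rule eq_matI)
  fix i j assume "i < dim_row (mat_adjoint B * mat_adjoint A)" "j < dim_col (mat_adjoint B * mat_adjoint A)"
  then have i: "i < n" and j: "j < n" using assms by auto
  have "mat_adjoint (A * B) $$ (i, j) = conjugate (\<Sum>k<n. A $$ (j, k) * B $$ (k, i))"
    using assms i j by (simp add: index_mat_adjoint scalar_prod_def atLeast0LessThan)
  also have "\<dots> = (\<Sum>k<n. conjugate (B $$ (k, i)) * conjugate (A $$ (j, k)))"
    by (simp add: sum_conjugate conjugate_dist_mul mult.commute)
  also have "\<dots> = (mat_adjoint B * mat_adjoint A) $$ (i, j)"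
    using assms i j by (simp add: index_mat_adjoint scalar_prod_def atLeast0LessThan)
  finally show "mat_adjoint (A * B) $$ (i, j) = (mat_adjoint B * mat_adjoint A) $$ (i, j)" .
qed (use assms in auto)

lemma mat_adjoint_right_unit:
  assumes "L \<in> carrier_mat n n" "V \<in> carrier_mat n n" "mat_adjoint V = V" "L * V = L"
  shows "V * mat_adjoint L = mat_adjoint L"
  using mat_adjoint_mult[OF assms(1,2)] assms(3,4) by simp

lemma msum_carrier_mat: "\<forall>k<K. f k \<in> carrier_mat n n \<Longrightarrow> msum n f K \<in> carrier_mat n n"
  by (induction K) auto

lemma msum_cong: "\<forall>k<K. f k = g k \<Longrightarrow> msum n f K = msum n g K"
  by (induction K) auto

lemma mult_msum:
  assumes V: "V \<in> carrier_mat n n" and f: "\<forall>k<K. f k \<in> carrier_mat n n"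
  shows "V * msum n f K = msum n (\<lambda>k. V * f k) K"
  using f
proof (induction K)
  case (Suc K)
  then have "V * msum n f K = msum n (\<lambda>k. V * f k) K"
    and "msum n f K \<in> carrier_mat n n" "f K \<in> carrier_mat n n"
    by (auto intro: msum_carrier_mat)
  then show ?case
    by (simp only: msum.simps mult_add_distrib_mat[OF V])
qed (use V in simp)

lemma msum_mult:
  assumes V: "V \<in> carrier_mat n n" and f: "\<forall>k<K. f k \<in> carrier_mat n n"
  shows "msum n f K * V = msum n (\<lambda>k. f k * V) K"
  using f
proof (induction K)
  case (Suc K)
  then have "msum n f K * V = msum n (\<lambda>k. f k * V) K"
    and "msum n f K \<in> carrier_mat n n" "f K \<in> carrier_mat n n"
    by (auto intro: msum_carrier_mat)
  then show ?case
    by (simp only: msum.simps add_mult_distrib_mat[OF _ _ V])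
qed (use V in simp)

definition lindblad_term :: "complex mat \<Rightarrow> complex mat \<Rightarrow> complex mat" where
  "lindblad_term L X = mat_adjoint L * X * L - (1/2 :: complex) \<cdot>\<^sub>m (mat_adjoint L * L * X)
     - (1/2 :: complex) \<cdot>\<^sub>m (X * (mat_adjoint L * L))"

lemma gen_eq_msum_lindblad_term: "gen n L K X = msum n (\<lambda>k. lindblad_term (L k) X) K"
  unfolding gen_def lindblad_term_def ..

lemma lindblad_term_carrier_mat:
  "L \<in> carrier_mat n n \<Longrightarrow> X \<in> carrier_mat n n \<Longrightarrow> lindblad_term L X \<in> carrier_mat n n"
  unfolding lindblad_term_def by (auto intro!: minus_carrier_mat)

lemma lindblad_term_right_unit:
  assumes L: "L \<in> carrier_mat n n" and V: "V \<in> carrier_mat n n"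
    and V_adj: "mat_adjoint V = V" and LV: "L * V = L"
  shows "lindblad_term L V = mat_adjoint L * (V - 1\<^sub>m n) * L"
proof -
  have L_adj: "mat_adjoint L \<in> carrier_mat n n"
    using L by simp
  have VL_adj: "V * mat_adjoint L = mat_adjoint L"
    using mat_adjoint_right_unit[OF L V V_adj LV] .
  have LLV: "mat_adjoint L * L * V = mat_adjoint L * L"
    using L V LV by (simp add: assoc_mult_mat[of _ n n _ n _ n])
  have VLL: "V * (mat_adjoint L * L) = mat_adjoint L * L"
    using L V VL_adj by (metis assoc_mult_mat mat_adjoint_carrier_mat)
  have half_half: "X - (1/2 :: complex) \<cdot>\<^sub>m Y - (1/2 :: complex) \<cdot>\<^sub>m Y = X - Y"
    if "X \<in> carrier_mat n n" "Y \<in> carrier_mat n n" for X Y :: "complex mat"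
    using that by (intro eq_matI) auto
  have "mat_adjoint L * (V - 1\<^sub>m n) * L = (mat_adjoint L * V - mat_adjoint L) * L"
    by (simp add: mult_minus_distrib_mat[OF L_adj V one_carrier_mat] right_mult_one_mat[OF L_adj])
  also have "\<dots> = mat_adjoint L * V * L - mat_adjoint L * L"
    using L_adj V L by (intro minus_mult_distrib_mat) auto
  finally show ?thesis
    unfolding lindblad_term_def LLV VLL
    using half_half[OF mult_carrier_mat[OF mult_carrier_mat[OF L_adj V] L] mult_carrier_mat[OF L_adj L]]
    by simp
qed

lemma sandwich_absorbing:
  assumes A: "A \<in> carrier_mat n n" and M: "M \<in> carrier_mat n n" and B: "B \<in> carrier_mat n n"
    and V: "V \<in> carrier_mat n n" and VA: "V * A = A" and BV: "B * V = B"
  shows "V * (A * M * B) = A * M * B" "A * M * B * V = A * M * B"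
proof -
  have AM: "A * M \<in> carrier_mat n n" using A M by simp
  have "V * (A * M * B) = V * (A * M) * B"
    using V AM B by (simp add: assoc_mult_mat)
  also have "\<dots> = A * M * B"
    using V A M by (simp add: assoc_mult_mat[symmetric] VA)
  finally show "V * (A * M * B) = A * M * B" .
  show "A * M * B * V = A * M * B"
    using AM B V by (simp add: assoc_mult_mat BV)
qed

lemma gen_absorbing:
  assumes L: "\<forall>k<K. L k \<in> carrier_mat n n \<and> L k * V = L k"
    and V: "V \<in> carrier_mat n n" and V_adj: "mat_adjoint V = V"
  shows "gen n L K V \<in> carrier_mat n n" "V * gen n L K V = gen n L K V" "gen n L K V * V = gen n L K V"
proof -
  have terms: "\<forall>k<K. lindblad_term (L k) V \<in> carrier_mat n n"
    using L V by (simp add: lindblad_term_carrier_mat)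
  have "V * lindblad_term (L k) V = lindblad_term (L k) V \<and>
        lindblad_term (L k) V * V = lindblad_term (L k) V" if "k < K" for k
  proof -
    have Lk: "L k \<in> carrier_mat n n" "L k * V = L k" using L that by auto
    show ?thesis
      unfolding lindblad_term_right_unit[OF Lk(1) V V_adj Lk(2)]
      using sandwich_absorbing[of "mat_adjoint (L k)" n "V - 1\<^sub>m n" "L k" V] Lk V
        mat_adjoint_right_unit[OF Lk(1) V V_adj Lk(2)]
      by (simp add: minus_carrier_mat[OF one_carrier_mat])
  qed
  then show "gen n L K V \<in> carrier_mat n n" "V * gen n L K V = gen n L K V" "gen n L K V * V = gen n L K V"
    unfolding gen_eq_msum_lindblad_term
    by (simp_all add: msum_carrier_mat terms mult_msum msum_mult V msum_cong)
qed

lemma dissip_projection_eq_uminus_gen: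
  assumes "\<forall>k<K. L k \<in> carrier_mat n n \<and> L k * V = L k"
    and V: "V \<in> carrier_mat n n" and V_adj: "mat_adjoint V = V" and V_idem: "V * V = V"
  shows "dissip n L K V = - gen n L K V"
  using gen_absorbing[OF assms(1) V V_adj]
  unfolding dissip_def V_adj V_idem by (intro eq_matI) auto

lemma cond_DS_imp_cond_ES:
  assumes "\<forall>k<K. L k \<in> carrier_mat n n \<and> L k * V = L k"
    and "hermitian_mat n V" "V * V = V" "cond_DS n L K V"
  shows "cond_ES n L K V"
proof -
  have V: "V \<in> carrier_mat n n" and V_adj: "mat_adjoint V = V"
    using assms(2) by (auto simp: hermitian_mat_def)
  obtain c :: real where "c > 0" and DS: "loewner_le n (complex_of_real c \<cdot>\<^sub>m V) (dissip n L K V)"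
    using assms(4) by (auto simp: cond_DS_def)
  have G: "gen n L K V \<in> carrier_mat n n"
    using gen_absorbing[OF assms(1) V V_adj] by simp
  have "- gen n L K V - complex_of_real c \<cdot>\<^sub>m V = (- complex_of_real c) \<cdot>\<^sub>m V - gen n L K V"
    using G V by (intro eq_matI) auto
  then have "loewner_le n (gen n L K V) ((- complex_of_real c) \<cdot>\<^sub>m V)"
    using DS G V
    by (simp add: loewner_le_def dissip_projection_eq_uminus_gen[OF assms(1) V V_adj assms(3)])
  with \<open>c > 0\<close> show ?thesis
    unfolding cond_ES_def by blast
qed

theorem corollary24:
  fixes n K :: nat and H V :: "complex mat" and L :: "nat \<Rightarrow> complex mat"
  assumes "hermitian_mat n H"
    and "\<forall>k<K. L k \<in> carrier_mat n n"
    and "lyapunov_op n L K V"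
    and "V * H = H * V"
    and "V * V = V"
    and "cond_DS n L K V"
    and "\<not> cond_ES n L K V"
  shows "(\<exists>k<K. \<not> (\<exists>U. unitary_mat n U \<and> L k = U * V))
       \<and> (K = 1 \<longrightarrow> \<not> (\<exists>U. unitary_mat n U \<and> L 0 = U * V))"
proof -
  have V_herm: "hermitian_mat n V"
    using assms(3) by (simp add: lyapunov_op_def)
  then have V: "V \<in> carrier_mat n n"
    by (simp add: hermitian_mat_def)
  have "L k * V = L k" if "unitary_mat n U" "L k = U * V" for k U
    using that V assms(5) by (metis assoc_mult_mat unitary_mat_def)
  moreover have "\<not> (\<forall>k<K. L k * V = L k)"
    using cond_DS_imp_cond_ES[OF _ V_herm assms(5,6)] assms(2,7) by blast
  ultimately have "\<exists>k<K. \<not> (\<exists>U. unitary_mat n U \<and> L k = U * V)"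
    by blast
  then show ?thesis
    by auto
qed

end
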